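(* Fix any total budget $\mathrm{TB}\in\mathbb N_0$. For every $k\in\mathbb N$, $-1/2^k<*<1/2^k$, where $*=\{0\mid 0\}$.
   Context: Game forms are defined recursively: $G=\{G^{\mathcal L}\mid G^{\mathcal R}\}$ with finite sets of Left and Right options, and finite birthday. $0=\{\varnothing\mid\varnothing\}$, $1=\{0\mid\varnothing\}$, $*=\{0\mid 0\}$. Dyadic game forms: $1/2^0=1$ and for $k\in\mathbb N$, $1/2^k=\{0\mid 1/2^{k-1}\}$; $-1/2^k=\overline{1/2^k}$, where the conjugate is $\bar G=\{\overline{G^{\mathcal R}}\mid\overline{G^{\mathcal L}}\}$. The budget set for total budget $\mathrm{TB}$ is $\mathcal B=\{0,\dots,\mathrm{TB},\hat 0,\dots,\widehat{\mathrm{TB}}\}$: state $p$ (resp. $\hat p$) means Left holds $p$ dollars and Right holds $\mathrm{TB}-p$, and Right (resp. Left) holds the tie-breaking marker. Play of $(G,\tilde p)$: at every position (terminal ones included) both players bid simultaneously, Left $\ell\in\{0,\dots,p\}$, Right $r\in\{0,\dots,\mathrm{TB}-p\}$. If Left holds the marker (state $\hat p$): if $\ell>r$ Left moves to $(G^L,\widehat{p-\ell})$, or, including the marker (allowed when $\ell\ge r$), to $(G^L,p-\ell)$; if $\ell=r$ Left wins, the marker passes to Right, play continues at $(G^L,p-\ell)$; if $\ell<r$ Right moves to $(G^R,\widehat{p+r})$. Symmetrically when Right holds the marker (state $p$): if $r>\ell$ Right moves to $(G^R,p+r)$ or, including the marker, to $(G^R,\widehat{p+r})$; if $r=\ell$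 Right wins, the marker passes to Left, play continues at $(G^R,\widehat{p+r})$; if $r<\ell$ Left moves to $(G^L,p-\ell)$. A player who wins a bid but has no option loses. $o(G,\tilde p)\in\{\mathrm L,\mathrm R\}$ is the winner under optimal play; $\mathrm L>\mathrm R$. Disjunctive sum $G+H=\{G^{\mathcal L}+H,G+H^{\mathcal L}\mid G^{\mathcal R}+H,G+H^{\mathcal R}\}$. $G\ge H$ means $o(G+X,\tilde p)\ge o(H+X,\tilde p)$ for all game forms $X$ and all $\tilde p\in\mathcal B$; $G>H$ means $G\ge H$ and not $H\ge G$; $G<H$ means $H>G$. *)

theory Defs
  imports "HOL-Library.FSet"
begin

text \<open>A game form is a pair of finite sets of Left and Right options.
  Finite birthday is automatic for an (inductive) datatype.\<close>

datatype game = Game (lopts: "game fset") (ropts: "game fset")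

definition zero_g :: game where "zero_g = Game {||} {||}"
definition one_g :: game where "one_g = Game {|zero_g|} {||}"
definition star_g :: game where "star_g = Game {|zero_g|} {|zero_g|}"

primrec conj_g :: "game \<Rightarrow> game" where
  "conj_g (Game L R) = Game (fimage conj_g R) (fimage conj_g L)"

text \<open>Dyadic game forms: dyad k = 1/2^k.\<close>
fun dyad :: "nat \<Rightarrow> game" where
  "dyad 0 = one_g"
| "dyad (Suc k) = Game {|zero_g|} {|dyad k|}"

lemma size_lopts[termination_simp]: "x |\<in>| L \<Longrightarrow> size x < size (Game L R)"
  by (induct L) (auto simp: size_fset_simps fset_of_list_elem)

lemma size_ropts[termination_simp]: "x |\<in>| R \<Longrightarrow> size x < size (Game L R)"
  by (induct R) (auto simp: size_fset_simps)

function (sequential) plus_g :: "game \<Rightarrow> game \<Rightarrow> game" where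
  "plus_g (Game GL GR) (Game HL HR) =
     Game ((\<lambda>g. plus_g g (Game HL HR)) |`| GL |\<union>| (\<lambda>h. plus_g (Game GL GR) h) |`| HL)
          ((\<lambda>g. plus_g g (Game HL HR)) |`| GR |\<union>| (\<lambda>h. plus_g (Game GL GR) h) |`| HR)"
  by pat_completeness auto
termination
  by (relation "measure (\<lambda>(g, h). size g + size h)") (auto dest: size_lopts size_ropts)

text \<open>winL TB G p m: in the position (G, budget state), where Left holds p dollars,
  Right holds TB - p dollars, and m = True means Left holds the marker (state \<open>p\<close> with hat),
  m = False means Right holds the marker (state p), Left wins under optimal play, i.e. Left has
  a bid such that, whatever Right bids, Left wins the remaining play.\<close>
primrec winL :: "nat \<Rightarrow> game \<Rightarrow> nat \<Rightarrow> bool \<Rightarrow> bool" where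
  "winL TB (Game L R) = (\<lambda>p m.
     let WL = fimage (winL TB) L; WR = fimage (winL TB) R in
     (\<exists>l\<le>p. \<forall>r\<le>TB - p.
        (if m then
           (l > r \<longrightarrow> (\<exists>w\<in>fset WL. w (p - l) True \<or> w (p - l) False)) \<and>
           (l = r \<longrightarrow> (\<exists>w\<in>fset WL. w (p - l) False)) \<and>
           (l < r \<longrightarrow> (\<forall>w\<in>fset WR. w (p + r) True))
         else
           (r > l \<longrightarrow> (\<forall>w\<in>fset WR. w (p + r) False \<and> w (p + r) True)) \<and>
           (r = l \<longrightarrow> (\<forall>w\<in>fset WR. w (p + r) True)) \<and>
           (r < l \<longrightarrow> (\<exists>w\<in>fset WL. w (p - l) False)))))"

text \<open>Outcome: True = L, False = R (with L > R).\<close>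
definition outcome :: "nat \<Rightarrow> game \<Rightarrow> nat \<Rightarrow> bool \<Rightarrow> bool" where
  "outcome TB G p m = winL TB G p m"

definition geq_g :: "nat \<Rightarrow> game \<Rightarrow> game \<Rightarrow> bool" where
  "geq_g TB G H = (\<forall>X p m. p \<le> TB \<longrightarrow> outcome TB (plus_g H X) p m \<longrightarrow> outcome TB (plus_g G X) p m)"

definition gt_g :: "nat \<Rightarrow> game \<Rightarrow> game \<Rightarrow> bool" where
  "gt_g TB G H = (geq_g TB G H \<and> \<not> geq_g TB H G)"

end

theory Submission
  imports Defs
begin

text \<open>Left's wins transfer along an order on budget states.  If Left wins \<open>X\<close> from a state, she
  wins \<open>1/2\<^sup>k + X\<close> from every better state: she copies her bids from \<open>X\<close>, a Right move to
  \<open>1/2\<^sup>k\<^sup>-\<^sup>1 + X\<close> is handled inductively (Left's state only improved), and when she gains the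
  marker and a tie at bid 0 now forces her to move, she moves \<open>1/2\<^sup>k\<close> to \<open>0\<close>.  Dually, if Left
  wins \<open>-1/2\<^sup>k + X\<close> she wins \<open>X\<close> from every better state.  Hence \<open>1/2\<^sup>k \<ge> 0 \<ge> -1/2\<^sup>k\<close>,
  and comparing options gives \<open>1/2\<^sup>k \<ge> * \<ge> -1/2\<^sup>k\<close>.  The inequalities are strict already
  against \<open>X = 0\<close>: \<open>*\<close> is a Left win at \<open>TB\<close> with the marker, where \<open>-1/2\<^sup>k\<close> is lost, and
  \<open>1/2\<^sup>k\<close> is a Left win at \<open>0\<close> without the marker, where \<open>*\<close> is lost.\<close>

text \<open>\<open>A s mm\<close> (\<open>B s mm\<close>) abstracts whether Left wins after Left (Right) moves and the budget
  state becomes \<open>(s, mm)\<close>.\<close>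

definition left_wins_round ::
    "(nat \<Rightarrow> bool \<Rightarrow> bool) \<Rightarrow> (nat \<Rightarrow> bool \<Rightarrow> bool) \<Rightarrow> nat \<Rightarrow> bool \<Rightarrow> nat \<Rightarrow> nat \<Rightarrow> bool" where
  "left_wins_round A B p m l r \<longleftrightarrow>
     (if m then (l > r \<longrightarrow> A (p - l) True \<or> A (p - l) False) \<and> (l = r \<longrightarrow> A (p - l) False) \<and>
                (l < r \<longrightarrow> B (p + r) True)
      else (r > l \<longrightarrow> B (p + r) False \<and> B (p + r) True) \<and> (r = l \<longrightarrow> B (p + r) True) \<and>
           (r < l \<longrightarrow> A (p - l) False))"

definition winning_bid ::
    "nat \<Rightarrow> (nat \<Rightarrow> bool \<Rightarrow> bool) \<Rightarrow> (nat \<Rightarrow> bool \<Rightarrow> bool) \<Rightarrow> nat \<Rightarrow> bool \<Rightarrow> nat \<Rightarrow> bool" where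
  "winning_bid TB A B p m l \<longleftrightarrow> l \<le> p \<and> (\<forall>r\<le>TB - p. left_wins_round A B p m l r)"

definition left_move_wins :: "nat \<Rightarrow> game \<Rightarrow> nat \<Rightarrow> bool \<Rightarrow> bool" where
  "left_move_wins TB G p m \<longleftrightarrow> (\<exists>x. x |\<in>| lopts G \<and> winL TB x p m)"

definition right_moves_lose :: "nat \<Rightarrow> game \<Rightarrow> nat \<Rightarrow> bool \<Rightarrow> bool" where
  "right_moves_lose TB G p m \<longleftrightarrow> (\<forall>x. x |\<in>| ropts G \<longrightarrow> winL TB x p m)"

lemma winL_iff_winning_bid:
  "winL TB G p m \<longleftrightarrow> (\<exists>l. winning_bid TB (left_move_wins TB G) (right_moves_lose TB G) p m l)"
  unfolding winning_bid_def left_wins_round_def left_move_wins_def right_moves_lose_def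
  by (cases G) (simp add: Let_def, intro ex_cong1 conj_cong refl all_cong1 imp_cong; auto)

declare winL.simps [simp del]

text \<open>Budget states ordered by money, and at equal money with the marker on Left's side
  (\<open>m = True\<close>, the paper's hatted state) above it on Right's.  \<open>winL\<close> is monotone in the money
  alone but not in this order: Left wins \<open>0\<close> at \<open>(p, False)\<close> and loses it at \<open>(p, True)\<close>.\<close>

definition state_le :: "nat \<Rightarrow> bool \<Rightarrow> nat \<Rightarrow> bool \<Rightarrow> bool" where
  "state_le a ma b mb \<longleftrightarrow> a < b \<or> (a = b \<and> (ma \<longrightarrow> mb))"

lemma state_le_refl: "state_le p m p m"
  by (simp add: state_le_def)

lemma left_wins_round_shift:
  assumes "left_wins_round A B p m l r"
    and "\<And>mm. A (p - l) mm \<Longrightarrow> A' (q - l) mm" and "\<And>mm. B (p + r) mm \<Longrightarrow> B' (q + r) mm"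
  shows "left_wins_round A' B' q m l r"
  using assms by (auto simp: left_wins_round_def)

lemma winning_bid_budget_shift:
  assumes "winning_bid TB A B p m l" and "p \<le> q"
    and "\<And>mm. A (p - l) mm \<Longrightarrow> A' (q - l) mm"
    and "\<And>r mm. r \<le> TB - q \<Longrightarrow> B (p + r) mm \<Longrightarrow> B' (q + r) mm"
  shows "winning_bid TB A' B' q m l"
  unfolding winning_bid_def
proof (intro conjI allI impI)
  show "l \<le> q" using assms(1,2) by (simp add: winning_bid_def)
  fix r assume "r \<le> TB - q"
  then have "left_wins_round A B p m l r"
    using assms(1,2) by (simp add: winning_bid_def)
  then show "left_wins_round A' B' q m l r"
    by (rule left_wins_round_shift) (use assms(3,4) \<open>r \<le> TB - q\<close> in auto)
qed

text \<open>A move by Right leaves Left in a state at least \<open>(q, True)\<close>: Right either pays or wins a tie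
  and hands over the marker.  Symmetrically a move by Left leaves her at most at \<open>(p, False)\<close>.\<close>

lemma winning_bid_conj_right:
  assumes "winning_bid TB A B q m l" and "q \<le> TB"
    and "\<And>s mm. state_le q True s mm \<Longrightarrow> s \<le> TB \<Longrightarrow> E s mm"
  shows "winning_bid TB A (\<lambda>s mm. E s mm \<and> B s mm) q m l"
proof -
  have "E (q + r) mm" if "0 < r \<or> mm" "r \<le> TB - q" for r mm
    using that assms(2) by (intro assms(3)) (auto simp: state_le_def)
  then show ?thesis
    using assms(1) by (auto simp: winning_bid_def left_wins_round_def)
qed

lemma winning_bid_disj_left:
  assumes "winning_bid TB (\<lambda>s mm. F s mm \<or> A s mm) B p m l"
    and "\<And>s mm. state_le s mm p False \<Longrightarrow> \<not> F s mm"
  shows "winning_bid TB A B p m l"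
  unfolding winning_bid_def
proof (intro conjI allI impI)
  show "l \<le> p" using assms(1) by (simp add: winning_bid_def)
  fix r assume "r \<le> TB - p"
  then have "left_wins_round (\<lambda>s mm. F s mm \<or> A s mm) B p m l r"
    using assms(1) by (simp add: winning_bid_def)
  moreover have "\<not> F (p - l) mm" if "0 < l \<or> \<not> mm" for mm
    using that \<open>l \<le> p\<close> by (intro assms(2)) (auto simp: state_le_def)
  ultimately show "left_wins_round A B p m l r"
    by (auto simp: left_wins_round_def split: if_splits)
qed

lemma winning_bid_state_mono:
  assumes win: "winning_bid TB A B p m l" and le: "state_le p m q m'" and "q \<le> TB"
    and A: "\<And>a ma b mb. state_le a ma b mb \<Longrightarrow> b \<le> TB \<Longrightarrow> A a ma \<Longrightarrow> A' b mb"
    and B: "\<And>a ma b mb. state_le a ma b mb \<Longrightarrow> b \<le> TB \<Longrightarrow> B a ma \<Longrightarrow> B' b mb"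
    and tie: "\<not> m \<Longrightarrow> m' \<Longrightarrow> l = 0 \<Longrightarrow> B p True \<Longrightarrow> A' q False"
  shows "winning_bid TB A' B' q m' l"
  unfolding winning_bid_def
proof (intro conjI allI impI)
  have "p \<le> q" using le by (auto simp: state_le_def)
  have "l \<le> p" and round: "\<And>r. r \<le> TB - p \<Longrightarrow> left_wins_round A B p m l r"
    using win by (auto simp: winning_bid_def)
  then show "l \<le> q" using \<open>p \<le> q\<close> by simp
  fix r assume r: "r \<le> TB - q"
  have shift_A: "A' (q - l) mm'" if "A (p - l) mm" "mm = mm' \<or> p < q" for mm mm'
    using that \<open>l \<le> p\<close> \<open>p \<le> q\<close> \<open>q \<le> TB\<close> by (intro A[of "p - l" mm]) (auto simp: state_le_def)
  have shift_B: "B' (q + r) mm'" if "B (p + r) mm" "mm = mm' \<or> p < q" for mm mm'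
    using that r \<open>p \<le> q\<close> \<open>q \<le> TB\<close> by (intro B[of "p + r" mm]) (auto simp: state_le_def)
  have "left_wins_round A B p m l r"
    using r \<open>p \<le> q\<close> by (intro round) simp
  consider (same_marker) "m = m'" | (gains_marker) "\<not> m" "m'" | (loses_marker) "m" "\<not> m'" "p < q"
    using le by (auto simp: state_le_def)
  then show "left_wins_round A' B' q m' l r"
  proof cases
    case same_marker
    then show ?thesis
      using \<open>left_wins_round A B p m l r\<close> shift_A shift_B by (auto intro: left_wins_round_shift)
  next
    case gains_marker
    txt \<open>A tie now goes to Left; Right bidding \<open>l - 1\<close> in the old state shows that she has a
      winning move, unless \<open>l = 0\<close>, which is what \<open>tie\<close> covers.\<close>
    have "A' (q - l) False" if "r = l"
    proof (cases "l = 0")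
      case True
      then have "B p True"
        using round[of 0] gains_marker by (simp add: left_wins_round_def)
      then show ?thesis using tie gains_marker True by simp
    next
      case False
      then have "A (p - l) False"
        using round[of "l - 1"] gains_marker that r \<open>p \<le> q\<close> by (simp add: left_wins_round_def)
      then show ?thesis using shift_A by blast
    qed
    then show ?thesis
      using \<open>left_wins_round A B p m l r\<close> gains_marker shift_A shift_B by (auto simp: left_wins_round_def)
  next
    case loses_marker
    txt \<open>A tie now goes to Right; compare with Right overbidding by one in the old state.\<close>
    have "B' (q + r) True" if "r = l"
    proof -
      have "B (p + (r + 1)) True"
        using round[of "r + 1"] loses_marker that r \<open>q \<le> TB\<close> by (simp add: left_wins_round_def)
      then show ?thesis
        using loses_marker r \<open>q \<le> TB\<close> by (intro B[of "p + (r + 1)" True]) (auto simp: state_le_def)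
    qed
    then show ?thesis
      using \<open>left_wins_round A B p m l r\<close> loses_marker shift_A shift_B by (auto simp: left_wins_round_def)
  qed
qed

lemma winL_budget_mono: "winL TB X p m \<Longrightarrow> p \<le> q \<Longrightarrow> q \<le> TB \<Longrightarrow> winL TB X q m"
proof (induction X arbitrary: p q m)
  case (Game XL XR)
  let ?X = "Game XL XR"
  obtain l where l: "winning_bid TB (left_move_wins TB ?X) (right_moves_lose TB ?X) p m l"
    using Game.prems(1) unfolding winL_iff_winning_bid by blast
  have left_shift: "left_move_wins TB ?X (q - l) mm" if win: "left_move_wins TB ?X (p - l) mm" for mm
  proof -
    obtain x where "x |\<in>| XL" "winL TB x (p - l) mm"
      using win by (auto simp: left_move_wins_def)
    moreover have "winL TB x (q - l) mm" if "x |\<in>| XL" "winL TB x (p - l) mm" for x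
      by (rule Game.IH(1)[OF that]) (use Game.prems(2,3) in auto)
    ultimately show ?thesis by (auto simp: left_move_wins_def)
  qed
  have right_shift: "right_moves_lose TB ?X (q + r) mm"
    if lose: "right_moves_lose TB ?X (p + r) mm" and "r \<le> TB - q" for r mm
    unfolding right_moves_lose_def
  proof (intro allI impI)
    fix x assume "x |\<in>| ropts ?X"
    then show "winL TB x (q + r) mm"
      using lose \<open>r \<le> TB - q\<close> Game.prems(2,3) Game.IH(2)[of x "p + r" mm "q + r"]
      by (auto simp: right_moves_lose_def)
  qed
  have "winning_bid TB (left_move_wins TB ?X) (right_moves_lose TB ?X) q m l"
    using l Game.prems(2) left_shift right_shift by (rule winning_bid_budget_shift)
  then show ?case unfolding winL_iff_winning_bid by blast
qed

lemma winL_options_mono: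
  assumes "winL TB G p m" "p \<le> TB"
    and "\<And>s mm. s \<le> TB \<Longrightarrow> left_move_wins TB G s mm \<Longrightarrow> left_move_wins TB G' s mm"
    and "\<And>s mm. s \<le> TB \<Longrightarrow> right_moves_lose TB G s mm \<Longrightarrow> right_moves_lose TB G' s mm"
  shows "winL TB G' p m"
proof -
  obtain l where l: "winning_bid TB (left_move_wins TB G) (right_moves_lose TB G) p m l"
    using assms(1) unfolding winL_iff_winning_bid by blast
  moreover have "p - l \<le> TB" "p + r \<le> TB" if "r \<le> TB - p" for r
    using assms(2) that by auto
  ultimately have "winning_bid TB (left_move_wins TB G') (right_moves_lose TB G') p m l"
    using assms(3,4) by (intro winning_bid_budget_shift[OF l order_refl]) auto
  then show ?thesis unfolding winL_iff_winning_bid by blast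
qed

lemma lopts_plus_g: "lopts (plus_g G H) = (\<lambda>g. plus_g g H) |`| lopts G |\<union>| plus_g G |`| lopts H"
  by (cases G; cases H) simp

lemma ropts_plus_g: "ropts (plus_g G H) = (\<lambda>g. plus_g g H) |`| ropts G |\<union>| plus_g G |`| ropts H"
  by (cases G; cases H) simp

lemma left_move_wins_plus_g:
  "left_move_wins TB (plus_g G H) s mm \<longleftrightarrow>
     (\<exists>g. g |\<in>| lopts G \<and> winL TB (plus_g g H) s mm) \<or> (\<exists>h. h |\<in>| lopts H \<and> winL TB (plus_g G h) s mm)"
  by (auto simp: left_move_wins_def lopts_plus_g)

lemma right_moves_lose_plus_g:
  "right_moves_lose TB (plus_g G H) s mm \<longleftrightarrow>
     (\<forall>g. g |\<in>| ropts G \<longrightarrow> winL TB (plus_g g H) s mm) \<and> (\<forall>h. h |\<in>| ropts H \<longrightarrow> winL TB (plus_g G h) s mm)"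
  by (auto simp: right_moves_lose_def ropts_plus_g)

lemma plus_g_zero_left: "plus_g zero_g X = X"
  by (induction X) (simp add: zero_g_def fset.map_ident_strong)

lemma plus_g_zero_right: "plus_g X zero_g = X"
  by (induction X) (simp add: zero_g_def fset.map_ident_strong)

lemma geq_g_if_options_dominate:
  assumes left: "\<And>h. h |\<in>| lopts H \<Longrightarrow> \<exists>g. g |\<in>| lopts G \<and> geq_g TB g h"
    and right: "\<And>g. g |\<in>| ropts G \<Longrightarrow> \<exists>h. h |\<in>| ropts H \<and> geq_g TB g h"
  shows "geq_g TB G H"
proof -
  have "winL TB (plus_g G X) p m" if "winL TB (plus_g H X) p m" "p \<le> TB" for X p m
    using that
  proof (induction X arbitrary: p m)
    case (Game XL XR)
    let ?X = "Game XL XR"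
    show ?case
    proof (rule winL_options_mono[OF Game.prems])
      fix s mm assume "s \<le> TB"
      show "left_move_wins TB (plus_g G ?X) s mm" if "left_move_wins TB (plus_g H ?X) s mm"
        using that left Game.IH(1) \<open>s \<le> TB\<close>
        unfolding left_move_wins_plus_g geq_g_def outcome_def game.sel by blast
      show "right_moves_lose TB (plus_g G ?X) s mm" if "right_moves_lose TB (plus_g H ?X) s mm"
        using that right Game.IH(2) \<open>s \<le> TB\<close>
        unfolding right_moves_lose_plus_g geq_g_def outcome_def game.sel by blast
    qed
  qed
  then show ?thesis by (auto simp: geq_g_def outcome_def)
qed

definition addition_keeps_left_wins :: "nat \<Rightarrow> game \<Rightarrow> bool" where
  "addition_keeps_left_wins TB G \<longleftrightarrow>
     (\<forall>X p m q m'. winL TB X p m \<longrightarrow> state_le p m q m' \<longrightarrow> q \<le> TB \<longrightarrow> winL TB (plus_g G X) q m')"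

definition removal_keeps_left_wins :: "nat \<Rightarrow> game \<Rightarrow> bool" where
  "removal_keeps_left_wins TB H \<longleftrightarrow>
     (\<forall>X p m q m'. winL TB (plus_g H X) p m \<longrightarrow> state_le p m q m' \<longrightarrow> q \<le> TB \<longrightarrow> winL TB X q m')"

lemma addition_keeps_left_winsI:
  assumes zero: "zero_g |\<in>| lopts G"
    and right: "\<And>y. y |\<in>| ropts G \<Longrightarrow> addition_keeps_left_wins TB y"
  shows "addition_keeps_left_wins TB G"
  unfolding addition_keeps_left_wins_def
proof (intro allI impI)
  fix X p m q m' assume "winL TB X p m" "state_le p m q m'" "q \<le> TB"
  then show "winL TB (plus_g G X) q m'"
  proof (induction X arbitrary: p m q m')
    case (Game XL XR)
    let ?X = "Game XL XR"
    let ?E = "\<lambda>s mm. \<forall>y. y |\<in>| ropts G \<longrightarrow> winL TB (plus_g y ?X) s mm"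
    let ?B = "\<lambda>s mm. \<forall>x. x |\<in>| XR \<longrightarrow> winL TB (plus_g G x) s mm"
    have "p \<le> q" using Game.prems(2) by (auto simp: state_le_def)
    obtain l where l: "winning_bid TB (left_move_wins TB ?X) (right_moves_lose TB ?X) p m l"
      using Game.prems(1) unfolding winL_iff_winning_bid by blast
    have "winning_bid TB (left_move_wins TB (plus_g G ?X)) ?B q m' l"
    proof (rule winning_bid_state_mono[OF l Game.prems(2,3)])
      fix a ma b mb assume ab: "state_le a ma b mb" "b \<le> TB"
      show "left_move_wins TB (plus_g G ?X) b mb" if "left_move_wins TB ?X a ma"
        using that ab Game.IH(1) unfolding left_move_wins_plus_g by (auto simp: left_move_wins_def)
      show "?B b mb" if "right_moves_lose TB ?X a ma"
        using that ab Game.IH(2) by (auto simp: right_moves_lose_def)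
    next
      assume "\<not> m"
      then have "winL TB ?X q False"
        using winL_budget_mono[OF Game.prems(1) \<open>p \<le> q\<close> Game.prems(3)] by simp
      then have "winL TB (plus_g zero_g ?X) q False" by (simp only: plus_g_zero_left)
      then show "left_move_wins TB (plus_g G ?X) q False"
        using zero unfolding left_move_wins_plus_g by blast
    qed
    then have "winning_bid TB (left_move_wins TB (plus_g G ?X)) (\<lambda>s mm. ?E s mm \<and> ?B s mm) q m' l"
    proof (rule winning_bid_conj_right[OF _ Game.prems(3)])
      fix s mm assume "state_le q True s mm" "s \<le> TB"
      moreover have "state_le p m s mm"
        using \<open>state_le q True s mm\<close> \<open>p \<le> q\<close> by (auto simp: state_le_def)
      ultimately show "?E s mm"
        using right Game.prems(1) by (auto simp: addition_keeps_left_wins_def)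
    qed
    moreover have "right_moves_lose TB (plus_g G ?X) = (\<lambda>s mm. ?E s mm \<and> ?B s mm)"
      by (intro ext) (simp add: right_moves_lose_plus_g)
    ultimately show ?case unfolding winL_iff_winning_bid by auto
  qed
qed

lemma removal_keeps_left_winsI:
  assumes zero: "zero_g |\<in>| ropts H"
    and left: "\<And>y. y |\<in>| lopts H \<Longrightarrow> removal_keeps_left_wins TB y"
  shows "removal_keeps_left_wins TB H"
  unfolding removal_keeps_left_wins_def
proof (intro allI impI)
  fix X p m q m' assume "winL TB (plus_g H X) p m" "state_le p m q m'" "q \<le> TB"
  then show "winL TB X q m'"
  proof (induction X arbitrary: p m q m')
    case (Game XL XR)
    let ?X = "Game XL XR"
    let ?F = "\<lambda>s mm. \<exists>y. y |\<in>| lopts H \<and> winL TB (plus_g y ?X) s mm"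
    let ?A = "\<lambda>s mm. \<exists>x. x |\<in>| XL \<and> winL TB (plus_g H x) s mm"
    show ?case
    proof (rule ccontr)
      assume lose: "\<not> winL TB ?X q m'"
      have "p \<le> q" using Game.prems(2) by (auto simp: state_le_def)
      have "left_move_wins TB (plus_g H ?X) = (\<lambda>s mm. ?F s mm \<or> ?A s mm)"
        by (intro ext) (simp add: left_move_wins_plus_g)
      then obtain l
        where "winning_bid TB (\<lambda>s mm. ?F s mm \<or> ?A s mm) (right_moves_lose TB (plus_g H ?X)) p m l"
        using Game.prems(1) unfolding winL_iff_winning_bid by auto
      then have "winning_bid TB ?A (right_moves_lose TB (plus_g H ?X)) p m l"
      proof (rule winning_bid_disj_left)
        fix s mm assume "state_le s mm p False"
        then have "state_le s mm q m'"
          using \<open>p \<le> q\<close> by (auto simp: state_le_def)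
        then show "\<not> ?F s mm"
          using left lose Game.prems(3) by (auto simp: removal_keeps_left_wins_def)
      qed
      then have "winning_bid TB (left_move_wins TB ?X) (right_moves_lose TB ?X) q m' l"
      proof (rule winning_bid_state_mono[OF _ Game.prems(2,3)])
        fix a ma b mb assume ab: "state_le a ma b mb" "b \<le> TB"
        show "left_move_wins TB ?X b mb" if "?A a ma"
          using that ab Game.IH(1) by (auto simp: left_move_wins_def)
        show "right_moves_lose TB ?X b mb" if "right_moves_lose TB (plus_g H ?X) a ma"
          using that ab Game.IH(2) unfolding right_moves_lose_plus_g
          by (auto simp: right_moves_lose_def)
      next
        txt \<open>Right's reply to \<open>0\<close> in \<open>H\<close> would show that Left wins \<open>X\<close> at \<open>(q, True)\<close>.\<close>
        assume "m'" "right_moves_lose TB (plus_g H ?X) p True"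
        then have "winL TB (plus_g zero_g ?X) p True"
          using zero by (simp add: right_moves_lose_plus_g)
        then have "winL TB ?X p True" by (simp only: plus_g_zero_left)
        then have "winL TB ?X q True"
          using winL_budget_mono \<open>p \<le> q\<close> Game.prems(3) by blast
        then show "left_move_wins TB ?X q False" using lose \<open>m'\<close> by simp
      qed
      then show False using lose unfolding winL_iff_winning_bid by blast
    qed
  qed
qed

lemma geq_zero_if_addition_keeps_left_wins:
  "addition_keeps_left_wins TB G \<Longrightarrow> geq_g TB G zero_g"
  unfolding addition_keeps_left_wins_def geq_g_def outcome_def plus_g_zero_left
  using state_le_refl by blast

lemma zero_geq_if_removal_keeps_left_wins:
  "removal_keeps_left_wins TB H \<Longrightarrow> geq_g TB zero_g H"
  unfolding removal_keeps_left_wins_def geq_g_def outcome_def plus_g_zero_left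
  using state_le_refl by blast

lemma not_geq_g_if_outcomes_differ:
  "winL TB H p m \<Longrightarrow> \<not> winL TB G p m \<Longrightarrow> p \<le> TB \<Longrightarrow> \<not> geq_g TB G H"
  unfolding geq_g_def outcome_def using plus_g_zero_right by metis

lemma geq_g_refl: "geq_g TB G G"
  by (simp add: geq_g_def)

lemma lopts_dyad: "lopts (dyad k) = {|zero_g|}"
  by (cases k) (simp_all add: one_g_def)

lemma ropts_dyad_Suc: "ropts (dyad (Suc k)) = {|dyad k|}"
  by simp

lemma lopts_conj_dyad_Suc: "lopts (conj_g (dyad (Suc k))) = {|conj_g (dyad k)|}"
  by simp

lemma ropts_conj_dyad: "ropts (conj_g (dyad k)) = {|zero_g|}"
  by (cases k) (simp_all add: one_g_def zero_g_def)

lemma addition_keeps_left_wins_dyad: "addition_keeps_left_wins TB (dyad k)"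
proof (induction k)
  case 0
  show ?case by (rule addition_keeps_left_winsI) (simp_all add: one_g_def)
next
  case (Suc k)
  show ?case
    by (rule addition_keeps_left_winsI) (simp_all add: lopts_dyad ropts_dyad_Suc Suc.IH del: dyad.simps)
qed

lemma removal_keeps_left_wins_conj_dyad: "removal_keeps_left_wins TB (conj_g (dyad k))"
proof (induction k)
  case 0
  show ?case by (rule removal_keeps_left_winsI) (simp_all add: one_g_def zero_g_def)
next
  case (Suc k)
  show ?case
    by (rule removal_keeps_left_winsI)
      (simp_all add: ropts_conj_dyad lopts_conj_dyad_Suc Suc.IH del: dyad.simps conj_g.simps)
qed

lemma winL_zero_iff: "winL TB zero_g p m \<longleftrightarrow> \<not> m"
  unfolding winL_iff_winning_bid
  by (auto simp: winning_bid_def left_wins_round_def left_move_wins_def right_moves_lose_def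
      zero_g_def intro!: exI[of _ 0])

lemma winL_star_all_budget_marker: "winL TB star_g TB True"
  unfolding winL_iff_winning_bid
  by (auto simp: winning_bid_def left_wins_round_def left_move_wins_def right_moves_lose_def
      star_g_def winL_zero_iff intro!: exI[of _ 0])

lemma not_winL_star_no_budget: "\<not> winL TB star_g 0 False"
  unfolding winL_iff_winning_bid
  by (auto simp: winning_bid_def left_wins_round_def left_move_wins_def right_moves_lose_def
      star_g_def winL_zero_iff intro!: exI[of _ 0])

lemma winL_dyad: "winL TB (dyad k) p m"
proof (induction k arbitrary: p m)
  case 0
  show ?case
    unfolding winL_iff_winning_bid
    by (auto simp: winning_bid_def left_wins_round_def left_move_wins_def right_moves_lose_def
        one_g_def winL_zero_iff intro!: exI[of _ 0])
next
  case (Suc k)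
  show ?case
    unfolding winL_iff_winning_bid
    by (auto simp: winning_bid_def left_wins_round_def left_move_wins_def right_moves_lose_def
        lopts_dyad ropts_dyad_Suc winL_zero_iff Suc.IH intro!: exI[of _ 0] simp del: dyad.simps)
qed

lemma not_winL_conj_dyad: "\<not> winL TB (conj_g (dyad k)) p m"
proof (induction k arbitrary: p m)
  case 0
  show ?case
    unfolding winL_iff_winning_bid
    by (auto simp: winning_bid_def left_wins_round_def left_move_wins_def right_moves_lose_def
        one_g_def zero_g_def winL_zero_iff[unfolded zero_g_def] intro!: exI[of _ 0])
next
  case (Suc k)
  show ?case
    unfolding winL_iff_winning_bid
    by (auto simp: winning_bid_def left_wins_round_def left_move_wins_def right_moves_lose_def
        lopts_conj_dyad_Suc ropts_conj_dyad winL_zero_iff Suc.IH intro!: exI[of _ 0]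
        simp del: dyad.simps conj_g.simps)
qed

theorem mainTheorem20:
  fixes TB :: nat and k :: nat
  assumes "k \<ge> 1"
  shows "gt_g TB star_g (conj_g (dyad k)) \<and> gt_g TB (dyad k) star_g"
proof -
  obtain i where k: "k = Suc i" using assms by (cases k) auto
  have star_geq: "geq_g TB star_g (conj_g (dyad k))"
  proof (rule geq_g_if_options_dominate)
    show "\<exists>g. g |\<in>| lopts star_g \<and> geq_g TB g h" if "h |\<in>| lopts (conj_g (dyad k))" for h
      using that zero_geq_if_removal_keeps_left_wins[OF removal_keeps_left_wins_conj_dyad]
      by (simp add: k lopts_conj_dyad_Suc star_g_def del: dyad.simps conj_g.simps)
    show "\<exists>h. h |\<in>| ropts (conj_g (dyad k)) \<and> geq_g TB g h" if "g |\<in>| ropts star_g" for g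
      using that geq_g_refl by (simp add: ropts_conj_dyad star_g_def del: dyad.simps conj_g.simps)
  qed
  have dyad_geq: "geq_g TB (dyad k) star_g"
  proof (rule geq_g_if_options_dominate)
    show "\<exists>g. g |\<in>| lopts (dyad k) \<and> geq_g TB g h" if "h |\<in>| lopts star_g" for h
      using that geq_g_refl by (simp add: lopts_dyad star_g_def del: dyad.simps)
    show "\<exists>h. h |\<in>| ropts star_g \<and> geq_g TB g h" if "g |\<in>| ropts (dyad k)" for g
      using that geq_zero_if_addition_keeps_left_wins[OF addition_keeps_left_wins_dyad]
      by (simp add: k ropts_dyad_Suc star_g_def del: dyad.simps)
  qed
  have "\<not> geq_g TB (conj_g (dyad k)) star_g"
    using not_geq_g_if_outcomes_differ winL_star_all_budget_marker not_winL_conj_dyad by blast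
  moreover have "\<not> geq_g TB star_g (dyad k)"
    using not_geq_g_if_outcomes_differ winL_dyad not_winL_star_no_budget by blast
  ultimately show ?thesis using star_geq dyad_geq by (simp add: gt_g_def)
qed

end
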